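(* For every integer $n \geq 2$ there is an MSyDS $\mathcal{S}_n$ with $n$ nodes (and some finite number of layers), in which every local function is a threshold function and every master function is a symmetric Boolean function, whose phase space consists of a single cycle of length $2^n$.
   Context: A multilayer synchronous dynamical system (MSyDS) $\mathcal{S}$ over $\mathbb{B}=\{0,1\}$ with $k\ge 1$ layers consists of: a finite node set $V$ with $n$ nodes; undirected simple graphs $G_i=(V,E_i)$, $1\le i\le k$ (all layers share the node set $V$); for each layer $i$ and node $v$ a local function $f_{i,v}$ with output in $\mathbb{B}$ whose inputs are the states of the nodes in the closed neighborhood of $v$ in $G_i$ ($v$ and its neighbors in $G_i$); and for each node $v$ a master function $\psi_v:\mathbb{B}^k\to\mathbb{B}$. A configuration is a map $\mathcal{C}:V\to\mathbb{B}$. The successor of $\mathcal{C}$ is the configuration $\mathcal{C}'$ with $\mathcal{C}'(v)=\psi_v(f_{1,v}(\mathcal{C}),\dots,f_{k,v}(\mathcal{C}))$ for every $v$ (synchronous update), where $f_{i,v}(\mathcal{C})$ is $f_{i,v}$ evaluated on the states in $\mathcal{C}$ of the closed neighborhood of $v$ in $G_i$. The phase space is the directed graph on the $2^n$ configurations with an arc from each configuration to its successor. For an integer $\tau\ge0$, the $\tau$-threshold function equals 1 iff at least $\tau$ of its inputs equal 1 (a threshold larger than the number of inputs gives the constant-0 function); a threshold function is a $\tau$-threshold function for some $\tau\ge 0$. A Boolean function is symmetric if its value depends only on the number of 1's among its inputs. *)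

theory Defs
  imports Main
begin

(* Nodes are 0..<n, layers are 0..<k.
   E i u v : u,v adjacent in layer graph G_i.
   f i v   : local function of node v in layer i, applied to a whole configuration
             (required to depend only on the closed neighbourhood of v in G_i).
   \<psi> v x   : master function of node v applied to the vector x of layer outputs,
             indexed by 0..<k (required to depend only on x 0 .. x (k-1)). *)

definition configs :: "nat \<Rightarrow> (nat \<Rightarrow> bool) set" where
  "configs n = {C. \<forall>u. n \<le> u \<longrightarrow> \<not> C u}"

definition cnbhd :: "(nat \<Rightarrow> nat \<Rightarrow> nat \<Rightarrow> bool) \<Rightarrow> nat \<Rightarrow> nat \<Rightarrow> nat set" where
  "cnbhd E i v = {u. u = v \<or> E i v u}"

definition is_msyds ::
  "nat \<Rightarrow> nat \<Rightarrow> (nat \<Rightarrow> nat \<Rightarrow> nat \<Rightarrow> bool) \<Rightarrow> (nat \<Rightarrow> nat \<Rightarrow> (nat \<Rightarrow> bool) \<Rightarrow> bool)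
     \<Rightarrow> (nat \<Rightarrow> (nat \<Rightarrow> bool) \<Rightarrow> bool) \<Rightarrow> bool" where
  "is_msyds n k E f \<psi> \<longleftrightarrow>
     1 \<le> k \<and>
     (\<forall>i<k. \<forall>u v. E i u v \<longrightarrow> u < n \<and> v < n \<and> u \<noteq> v \<and> E i v u) \<and>
     (\<forall>i<k. \<forall>v<n. \<forall>C D. (\<forall>u\<in>cnbhd E i v. C u = D u) \<longrightarrow> f i v C = f i v D) \<and>
     (\<forall>v<n. \<forall>x y. (\<forall>i<k. x i = y i) \<longrightarrow> \<psi> v x = \<psi> v y)"

definition succ_conf ::
  "nat \<Rightarrow> (nat \<Rightarrow> nat \<Rightarrow> (nat \<Rightarrow> bool) \<Rightarrow> bool) \<Rightarrow> (nat \<Rightarrow> (nat \<Rightarrow> bool) \<Rightarrow> bool)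
     \<Rightarrow> (nat \<Rightarrow> bool) \<Rightarrow> (nat \<Rightarrow> bool)" where
  "succ_conf n f \<psi> C = (\<lambda>v. v < n \<and> \<psi> v (\<lambda>i. f i v C))"

definition is_threshold_local ::
  "(nat \<Rightarrow> nat \<Rightarrow> nat \<Rightarrow> bool) \<Rightarrow> nat \<Rightarrow> nat \<Rightarrow> ((nat \<Rightarrow> bool) \<Rightarrow> bool) \<Rightarrow> bool" where
  "is_threshold_local E i v g \<longleftrightarrow>
     (\<exists>\<tau>::nat. \<forall>C. g C = (\<tau> \<le> card {u \<in> cnbhd E i v. C u}))"

definition symmetric_fun :: "nat \<Rightarrow> ((nat \<Rightarrow> bool) \<Rightarrow> bool) \<Rightarrow> bool" where
  "symmetric_fun k g \<longleftrightarrow>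
     (\<forall>x y. card {i. i < k \<and> x i} = card {i. i < k \<and> y i} \<longrightarrow> g x = g y)"

definition phase_space_single_cycle ::
  "nat \<Rightarrow> ((nat \<Rightarrow> bool) \<Rightarrow> (nat \<Rightarrow> bool)) \<Rightarrow> bool" where
  "phase_space_single_cycle n F \<longleftrightarrow>
     (\<exists>C0 \<in> configs n. (F ^^ (2 ^ n)) C0 = C0 \<and>
        {(F ^^ j) C0 | j. j < 2 ^ n} = configs n \<and>
        inj_on (\<lambda>j. (F ^^ j) C0) {..<2 ^ n})"

end

theory Submission
  imports Defs
begin

text \<open>Read a configuration as the binary number with bit \<open>v\<close> the state of node \<open>v\<close>. Adding 1
  modulo \<open>2 ^ n\<close> runs through all \<open>2 ^ n\<close> numbers in a single cycle, and it flips bit \<open>v\<close> exactly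
  when bits \<open>0, \<dots>, v - 1\<close> are all set. This carry rule is realised by threshold functions on
  cliques \<open>{0, \<dots>, v}\<close> combined by a symmetric master function.\<close>

lemma bit_Suc_nat_iff: "bit (Suc m) v \<longleftrightarrow> bit m v \<noteq> (\<forall>u<v. bit m u)" for m :: nat
proof (induction v arbitrary: m)
  case 0
  then show ?case by (simp add: bit_0)
next
  case (Suc v)
  show ?case
  proof (cases "odd m")
    case True
    then have "Suc m div 2 = Suc (m div 2)" by presburger
    moreover have "(\<forall>u<Suc v. bit m u) \<longleftrightarrow> (\<forall>u<v. bit (m div 2) u)"
      using True by (auto simp: bit_Suc bit_0 less_Suc_eq_0_disj)
    ultimately show ?thesis using Suc.IH[of "m div 2"] by (simp add: bit_Suc)
  next
    case False
    then have "Suc m div 2 = m div 2" by presburger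
    then show ?thesis using False by (auto simp: bit_Suc bit_0)
  qed
qed

definition conf_of_nat :: "nat \<Rightarrow> nat \<Rightarrow> nat \<Rightarrow> bool" where
  "conf_of_nat n m = (\<lambda>v. v < n \<and> bit m v)"

lemma conf_of_nat_in_configs: "conf_of_nat n m \<in> configs n"
  by (simp add: conf_of_nat_def configs_def)

lemma conf_of_nat_eq_iff: "conf_of_nat n a = conf_of_nat n b \<longleftrightarrow> take_bit n a = take_bit n b"
  by (auto simp: conf_of_nat_def fun_eq_iff bit_eq_iff bit_take_bit_iff)

lemma inj_on_conf_of_nat: "inj_on (conf_of_nat n) {..<2 ^ n}"
  by (rule inj_onI) (simp add: conf_of_nat_eq_iff take_bit_nat_eq_self)

lemma configs_eq_image_conf_of_nat: "configs n = conf_of_nat n ` {..<2 ^ n}"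
proof
  show "configs n \<subseteq> conf_of_nat n ` {..<2 ^ n}"
  proof
    fix C assume C: "C \<in> configs n"
    define m :: nat where "m = horner_sum of_bool 2 (map C [0..<n])"
    have "m = take_bit n m"
      by (simp add: m_def take_bit_horner_sum_bit_eq)
    then have "m < 2 ^ n"
      by (metis take_bit_nat_less_exp)
    moreover have "C = conf_of_nat n m"
    proof
      fix v show "C v = conf_of_nat n m v"
        using C by (cases "v < n") (auto simp: m_def conf_of_nat_def configs_def bit_horner_sum_bit_iff)
    qed
    ultimately show "C \<in> conf_of_nat n ` {..<2 ^ n}" by blast
  qed
qed (auto simp: conf_of_nat_in_configs)

lemma phase_space_single_cycle_binary_counter:
  assumes step: "\<And>m. F (conf_of_nat n m) = conf_of_nat n (Suc m)"
  shows "phase_space_single_cycle n F"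
proof -
  have iterate: "(F ^^ j) (conf_of_nat n 0) = conf_of_nat n j" for j
    by (induction j) (simp_all add: step)
  have "(F ^^ 2 ^ n) (conf_of_nat n 0) = conf_of_nat n 0"
    by (simp add: iterate conf_of_nat_eq_iff)
  moreover have "{(F ^^ j) (conf_of_nat n 0) | j. j < 2 ^ n} = configs n"
    by (auto simp: iterate configs_eq_image_conf_of_nat)
  moreover have "inj_on (\<lambda>j. (F ^^ j) (conf_of_nat n 0)) {..<2 ^ n}"
    by (simp add: iterate inj_on_conf_of_nat)
  ultimately show ?thesis
    unfolding phase_space_single_cycle_def using conf_of_nat_in_configs by blast
qed

definition threshold_local ::
  "(nat \<Rightarrow> nat \<Rightarrow> nat \<Rightarrow> bool) \<Rightarrow> (nat \<Rightarrow> nat \<Rightarrow> nat) \<Rightarrow> nat \<Rightarrow> nat \<Rightarrow> (nat \<Rightarrow> bool) \<Rightarrow> bool" where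
  "threshold_local E \<tau> i v C \<longleftrightarrow> \<tau> i v \<le> card {u \<in> cnbhd E i v. C u}"

definition count_master :: "nat \<Rightarrow> nat set \<Rightarrow> (nat \<Rightarrow> bool) \<Rightarrow> bool" where
  "count_master k S x \<longleftrightarrow> card {i. i < k \<and> x i} \<in> S"

lemma is_threshold_local_threshold_local: "is_threshold_local E i v (threshold_local E \<tau> i v)"
  unfolding is_threshold_local_def threshold_local_def by blast

lemma symmetric_fun_count_master: "symmetric_fun k (count_master k S)"
  by (simp add: symmetric_fun_def count_master_def)

lemma is_msyds_threshold_count:
  assumes "1 \<le> k"
    and graphs: "\<And>i u v. i < k \<Longrightarrow> E i u v \<Longrightarrow> u < n \<and> v < n \<and> u \<noteq> v \<and> E i v u"
  shows "is_msyds n k E (threshold_local E \<tau>) (\<lambda>v. count_master k S)"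
proof -
  have local: "threshold_local E \<tau> i v C = threshold_local E \<tau> i v D"
    if "\<forall>u\<in>cnbhd E i v. C u = D u" for i v C D
  proof -
    from that have "{u \<in> cnbhd E i v. C u} = {u \<in> cnbhd E i v. D u}" by auto
    then show ?thesis by (simp add: threshold_local_def)
  qed
  have master: "count_master k S x = count_master k S y" if "\<forall>i<k. x i = y i" for x y
  proof -
    from that have "{i. i < k \<and> x i} = {i. i < k \<and> y i}" by auto
    then show ?thesis by (simp add: count_master_def)
  qed
  show ?thesis
    unfolding is_msyds_def
  proof (intro conjI allI impI)
    fix i u v assume "i < k" "E i u v"
    then show "u < n" "v < n" "u \<noteq> v" "E i v u" using graphs by blast+
  qed (use assms(1) local master in auto)
qed

lemma card_cnbhd_le:
  assumes "v < n" and "\<And>u. E i v u \<Longrightarrow> u < n"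
  shows "card {u \<in> cnbhd E i v. C u} \<le> n"
proof -
  have "{u \<in> cnbhd E i v. C u} \<subseteq> {..<n}"
    using assms by (auto simp: cnbhd_def)
  then show ?thesis
    by (metis card_lessThan card_mono finite_lessThan)
qed

lemma card_lessThan_filter_eq_iff: "card {u. u < v \<and> C u} = v \<longleftrightarrow> (\<forall>u<v. C u)"
proof
  assume "card {u. u < v \<and> C u} = v"
  then have "{u. u < v \<and> C u} = {..<v}"
    by (intro card_subset_eq) auto
  then show "\<forall>u<v. C u" by auto
next
  assume "\<forall>u<v. C u"
  then have "{u. u < v \<and> C u} = {..<v}" by auto
  then show "card {u. u < v \<and> C u} = v" by simp
qed

lemma card_lessThan_filter_le: "card {u. u < v \<and> C u} \<le> v"
  by (metis (no_types, lifting) card_lessThan card_mono finite_lessThan lessThan_iff mem_Collect_eq subsetI)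

lemma card_atMost_filter:
  "card {u \<in> {..v}. C u} = card {u. u < v \<and> C u} + of_bool (C v)" for v :: nat
proof -
  have "{u \<in> {..v}. C u} = {u. u < v \<and> C u} \<union> (if C v then {v} else {})"
    by (auto simp: nat_less_le)
  then show ?thesis by auto
qed

text \<open>Layers \<open>i\<close> and \<open>n + i\<close> (\<open>i < n\<close>) are the complete graph on \<open>{0..i}\<close>, layer \<open>2 n\<close>
  has no edges. Node \<open>v\<close> learns from layer \<open>v\<close> whether \<open>0, \<dots>, v\<close> are all on, from layer
  \<open>n + v\<close> whether at most one of them is off, and from layer \<open>2 n\<close> its own state; on every
  other layer its threshold exceeds its number of inputs. Exactly one or two of the three
  answers are true iff \<open>C v \<noteq> (\<forall>u<v. C u)\<close>.\<close>

definition counter_graph :: "nat \<Rightarrow> nat \<Rightarrow> nat \<Rightarrow> nat \<Rightarrow> bool" where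
  "counter_graph n i u w \<longleftrightarrow> i < 2 * n \<and> u \<le> i mod n \<and> w \<le> i mod n \<and> u \<noteq> w"

definition counter_threshold :: "nat \<Rightarrow> nat \<Rightarrow> nat \<Rightarrow> nat" where
  "counter_threshold n i v =
     (if i = v then Suc v else if i = n + v then v else if i = 2 * n then 1 else Suc n)"

abbreviation counter_local :: "nat \<Rightarrow> nat \<Rightarrow> nat \<Rightarrow> (nat \<Rightarrow> bool) \<Rightarrow> bool" where
  "counter_local n \<equiv> threshold_local (counter_graph n) (counter_threshold n)"

abbreviation counter_master :: "nat \<Rightarrow> (nat \<Rightarrow> bool) \<Rightarrow> bool" where
  "counter_master n \<equiv> count_master (Suc (2 * n)) {1, 2}"

lemma counter_graph_is_simple:
  assumes "counter_graph n i u w"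
  shows "u < n \<and> w < n \<and> u \<noteq> w \<and> counter_graph n i w u"
  using assms unfolding counter_graph_def
  by (metis le_less_trans mod_less_divisor not_gr0 not_less_zero mult_0_right)

lemma cnbhd_counter_graph:
  assumes "v < n"
  shows "cnbhd (counter_graph n) v v = {..v}"
    and "cnbhd (counter_graph n) (n + v) v = {..v}"
    and "cnbhd (counter_graph n) (2 * n) v = {v}"
  using assms by (auto simp: cnbhd_def counter_graph_def)

lemma counter_layer_outputs:
  fixes C :: "nat \<Rightarrow> bool"
  assumes "v < n"
  defines "c \<equiv> card {u \<in> {..v}. C u}"
  shows "{i. i < Suc (2 * n) \<and> counter_local n i v C} =
    {i. i = v \<and> Suc v \<le> c \<or> i = n + v \<and> v \<le> c \<or> i = 2 * n \<and> C v}"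
proof -
  have "{u \<in> {v}. C u} = (if C v then {v} else {})" by auto
  then have own: "counter_local n (2 * n) v C = C v"
    using assms by (simp add: threshold_local_def counter_threshold_def cnbhd_counter_graph)
  have "\<not> counter_local n i v C" if "i \<noteq> v" "i \<noteq> n + v" "i \<noteq> 2 * n" for i
    using that card_cnbhd_le[OF assms(1), of "counter_graph n" i C] counter_graph_is_simple
    by (auto simp: threshold_local_def counter_threshold_def not_le less_Suc_eq_le)
  with own assms show ?thesis
    by (auto simp: threshold_local_def counter_threshold_def cnbhd_counter_graph)
qed

lemma carry_count:
  fixes S v :: nat
  assumes "S \<le> v" and "S = v \<longleftrightarrow> P"
  shows "of_bool (Suc v \<le> S + of_bool b) + of_bool (v \<le> S + of_bool b) + of_bool b \<in> {1, 2::nat}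
    \<longleftrightarrow> b \<noteq> P"
  using assms by (cases b) auto

lemma succ_conf_counter:
  assumes "v < n"
  shows "succ_conf n (counter_local n) (\<lambda>v. counter_master n) C v \<longleftrightarrow> C v \<noteq> (\<forall>u<v. C u)"
proof -
  define c where "c = card {u \<in> {..v}. C u}"
  have "v \<noteq> n + v" "v \<noteq> 2 * n" "n + v \<noteq> 2 * n" using assms by auto
  then have "card {i. i = v \<and> Suc v \<le> c \<or> i = n + v \<and> v \<le> c \<or> i = 2 * n \<and> C v}
      = of_bool (Suc v \<le> c) + of_bool (v \<le> c) + of_bool (C v)"
    by (cases "Suc v \<le> c"; cases "v \<le> c"; cases "C v") (simp_all add: Collect_disj_eq)
  also have "\<dots> \<in> {1, 2} \<longleftrightarrow> C v \<noteq> (\<forall>u<v. C u)"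
    unfolding c_def card_atMost_filter
    by (intro carry_count card_lessThan_filter_le card_lessThan_filter_eq_iff)
  finally show ?thesis
    using assms by (simp add: succ_conf_def count_master_def counter_layer_outputs c_def)
qed

lemma succ_conf_counter_conf_of_nat:
  "succ_conf n (counter_local n) (\<lambda>v. counter_master n) (conf_of_nat n m) = conf_of_nat n (Suc m)"
proof
  fix v
  show "succ_conf n (counter_local n) (\<lambda>v. counter_master n) (conf_of_nat n m) v = conf_of_nat n (Suc m) v"
  proof (cases "v < n")
    case True
    then show ?thesis
      using succ_conf_counter[OF True, of "conf_of_nat n m"] by (simp add: bit_Suc_nat_iff conf_of_nat_def)
  next
    case False
    then show ?thesis by (simp add: succ_conf_def conf_of_nat_def)
  qed
qed

text \<open>The construction works for every \<open>n\<close>.\<close>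

theorem theorem3p3:
  fixes n :: nat
  assumes "2 \<le> n"
  shows "\<exists>(k::nat) E f \<psi>. is_msyds n k E f \<psi> \<and>
           (\<forall>i<k. \<forall>v<n. is_threshold_local E i v (f i v)) \<and>
           (\<forall>v<n. symmetric_fun k (\<psi> v)) \<and>
           phase_space_single_cycle n (succ_conf n f \<psi>)"
proof (intro exI conjI)
  show "is_msyds n (Suc (2 * n)) (counter_graph n) (counter_local n) (\<lambda>v. counter_master n)"
    by (rule is_msyds_threshold_count) (simp_all, metis counter_graph_is_simple)
  show "\<forall>i<Suc (2 * n). \<forall>v<n. is_threshold_local (counter_graph n) i v (counter_local n i v)"
    by (simp add: is_threshold_local_threshold_local)
  show "\<forall>v<n. symmetric_fun (Suc (2 * n)) (counter_master n)"
    by (simp add: symmetric_fun_count_master)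
  show "phase_space_single_cycle n (succ_conf n (counter_local n) (\<lambda>v. counter_master n))"
    by (rule phase_space_single_cycle_binary_counter) (rule succ_conf_counter_conf_of_nat)
qed

end
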